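(* In the symmetric Tardos scheme, the arcsine distribution is asymptotically optimal: for each integer $c \ge 1$ let $F_{2c}$ be the optimal (Gauss–Legendre) bias distribution function against $2c$ colluders, namely $F_{2c}(p) = \frac{1}{N_c}\sum_{k=1}^c w_{k,c} H(p - p_{k,c})$ for $0 \le p \le 1$; then for every $p \in (0,1)$, $F_{2c}(p) \to F_\infty(p) = \frac{2}{\pi}\arcsin\sqrt{p}$ as $c \to \infty$.
   Context: Symmetric Tardos scheme: for $n$ users and $\ell$ segments, biases $p_i \sim F$ are drawn independently for each segment $i$, code entries $X_{j,i} \sim \mathrm{Bernoulli}(p_i)$; given a pirate output $y \in \{0,1\}^\ell$, user $j$ gets score $\sum_i g(X_{j,i},y_i,p_i)$ with $g = +\sqrt{(1-p)/p}$ if $X=1,y=1$; $-\sqrt{(1-p)/p}$ if $X=1,y=0$; $-\sqrt{p/(1-p)}$ if $X=0,y=1$; $+\sqrt{p/(1-p)}$ if $X=0,y=0$; and is accused if the score exceeds a threshold. Here $P_c(x)=\frac{1}{2^c c!}\left(\frac{d}{dx}\right)^c(x^2-1)^c$ is the $c$th Legendre polynomial with roots $x_{1,c}<\cdots<x_{c,c}$ in $(-1,1)$, $p_{k,c}=(x_{k,c}+1)/2$, $w_{k,c}=2/\big((1-x_{k,c}^2)^{3/2}P_c'(x_{k,c})^2\big)$, $N_c=\sum_{k=1}^c w_{k,c}$, and $H$ is the Heaviside step function. The distributions $F_{2c}$ (equal to $F_{2c-1}$) are, by a result of Nuida et al., the bias distributions maximizing the expected coalition score against $2c-1$ or $2c$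 colluders; "asymptotically optimal" means that these optimal distributions converge to the arcsine distribution $F_\infty$. *)

theory Defs
  imports "HOL-Analysis.Analysis" "HOL-Computational_Algebra.Polynomial"
begin

definition legendre :: "nat \<Rightarrow> real poly" where
  "legendre c = smult (1 / (2 ^ c * fact c)) ((pderiv ^^ c) ([:-1, 0, 1:] ^ c))"

text \<open>Roots x_{1,c} < ... < x_{c,c} of P_c in (-1,1), indexed from 1.\<close>
definition legendre_root :: "nat \<Rightarrow> nat \<Rightarrow> real" where
  "legendre_root k c =
     sorted_list_of_set {x. -1 < x \<and> x < 1 \<and> poly (legendre c) x = 0} ! (k - 1)"

definition tardos_p :: "nat \<Rightarrow> nat \<Rightarrow> real" where
  "tardos_p k c = (legendre_root k c + 1) / 2"

definition tardos_w :: "nat \<Rightarrow> nat \<Rightarrow> real" where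
  "tardos_w k c = 2 / ((1 - (legendre_root k c)\<^sup>2) powr (3/2)
                        * (poly (pderiv (legendre c)) (legendre_root k c))\<^sup>2)"

definition tardos_N :: "nat \<Rightarrow> real" where
  "tardos_N c = (\<Sum>k=1..c. tardos_w k c)"

definition heaviside :: "real \<Rightarrow> real" where
  "heaviside x = (if x \<ge> 0 then 1 else 0)"

definition F_opt :: "nat \<Rightarrow> real \<Rightarrow> real" where
  "F_opt c p = (1 / tardos_N c) * (\<Sum>k=1..c. tardos_w k c * heaviside (p - tardos_p k c))"

definition F_arcsine :: "real \<Rightarrow> real" where
  "F_arcsine p = 2 / pi * arcsin (sqrt p)"

end

theory Submission
  imports Defs
begin

text \<open>
  The points \<open>x\<^sub>k\<^sub>,\<^sub>c\<close> are the nodes of Gauss--Legendre quadrature, and \<open>w\<^sub>k\<^sub>,\<^sub>c\<close> is, up to a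
  factor depending only on \<open>c\<close>, the quadrature weight \<open>\<lambda>\<^sub>k\<^sub>,\<^sub>c\<close> times \<open>g(x\<^sub>k\<^sub>,\<^sub>c)\<close>, where
  \<open>g(x) = (1 - x\<^sup>2)\<^sup>-\<^sup>1\<^sup>/\<^sup>2\<close>. So \<open>F\<^sub>2\<^sub>c(p)\<close> is the ratio of the quadrature sums of \<open>g\<close>
  restricted to \<open>x \<le> 2p - 1\<close> and of \<open>g\<close> itself. Being positive and exact for polynomials of
  degree \<open>< 2c\<close>, the quadrature sums converge to the integral for every continuous function.
  The singularity of \<open>g\<close> at \<open>\<plusminus>1\<close> is controlled uniformly in \<open>c\<close>: for \<open>z > 1\<close> the polynomial
  \<open>(1 - (P\<^sub>c(x) / P\<^sub>c(z))\<^sup>2) / (z - x)\<close> interpolates \<open>1 / (z - x)\<close> at the nodes and lies below it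
  on \<open>[-1, 1]\<close>, so the quadrature sum of \<open>1 / (z - x)\<close> is at most \<open>ln ((z + 1) / (z - 1))\<close>;
  writing \<open>g\<close> as a dyadic superposition of such kernels bounds the contribution of the nodes
  near \<open>\<plusminus>1\<close>. Hence the two quadrature sums tend to \<open>arcsin (2p - 1) + \<pi>/2\<close> and \<open>\<pi>\<close>, whose
  ratio is \<open>2/\<pi> arcsin \<surd>p\<close>.
\<close>

definition poly_integral :: "real poly \<Rightarrow> real" where
  "poly_integral p = integral {-1..1} (poly p)"

lemma poly_integrable_on [simp]: "poly p integrable_on {a..b}" for p :: "real poly"
  by (intro integrable_continuous_real continuous_on_poly continuous_on_id)

lemma poly_integral_add [simp]: "poly_integral (p + q) = poly_integral p + poly_integral q"
  unfolding poly_integral_def poly_add[abs_def] by (simp add: integral_add)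

lemma poly_integral_diff [simp]: "poly_integral (p - q) = poly_integral p - poly_integral q"
  unfolding poly_integral_def poly_diff[abs_def] by (simp add: integral_diff)

lemma poly_integral_smult [simp]: "poly_integral (smult a p) = a * poly_integral p"
  unfolding poly_integral_def poly_smult[abs_def] by simp

lemma poly_integral_0 [simp]: "poly_integral 0 = 0"
  unfolding poly_integral_def poly_0[abs_def] by simp

lemma poly_integral_sum: "poly_integral (\<Sum>i\<in>A. f i) = (\<Sum>i\<in>A. poly_integral (f i))"
  by (induction A rule: infinite_finite_induct) auto

lemma poly_integral_const [simp]: "poly_integral [:k:] = 2 * k"
  unfolding poly_integral_def by (simp add: poly_pCons[abs_def])

lemma poly_integral_pderiv: "poly_integral (pderiv p) = poly p 1 - poly p (-1)"
  unfolding poly_integral_def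
  by (intro integral_unique fundamental_theorem_of_calculus)
     (auto simp: has_real_derivative_iff_has_vector_derivative[symmetric] intro: DERIV_subset[OF poly_DERIV])

lemma poly_integral_square_pos:
  assumes "p \<noteq> 0"
  shows "poly_integral (p * p) > 0"
proof -
  have nonneg: "\<And>x. poly (p * p) x \<ge> 0" by simp
  have cont: "continuous_on {-1..1} (poly (p * p))" by (intro continuous_intros)
  have "poly_integral (p * p) \<noteq> 0"
  proof
    assume "poly_integral (p * p) = 0"
    then have "{-1..1} \<subseteq> {x. poly (p * p) x = 0}"
      unfolding poly_integral_def by (subst (asm) integral_eq_0_iff) (use cont nonneg in auto)
    moreover have "finite {x. poly (p * p) x = 0}"
      using assms by (intro poly_roots_finite) simp
    ultimately have "finite {-1..1::real}" by (rule finite_subset)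
    then show False using infinite_Icc[of "-1::real" 1] by simp
  qed
  moreover have "poly_integral (p * p) \<ge> 0"
    unfolding poly_integral_def using nonneg by (intro integral_nonneg) auto
  ultimately show ?thesis by simp
qed

section \<open>Legendre polynomials and their roots\<close>

lemma power_dvd_pderiv:
  fixes p r :: "'a::idom poly"
  assumes "r ^ Suc n dvd p"
  shows "r ^ n dvd pderiv p"
proof -
  obtain q where "p = r ^ Suc n * q" using assms by (auto elim: dvdE)
  then have "pderiv p = r ^ n * (r * pderiv q + q * smult (of_nat (Suc n)) (pderiv r))"
    by (simp only: pderiv_mult pderiv_power_Suc) (simp add: algebra_simps)
  then show ?thesis by simp
qed

lemma power_dvd_higher_pderiv:
  fixes p r :: "'a::idom poly"
  assumes "r ^ (n + j) dvd p"
  shows "r ^ n dvd (pderiv ^^ j) p"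
  using assms
proof (induction j arbitrary: p)
  case (Suc j)
  then have "r ^ n dvd (pderiv ^^ j) (pderiv p)" by (simp add: power_dvd_pderiv)
  then show ?case by (simp add: funpow_Suc_right del: funpow.simps)
qed simp

lemma pderiv_roots_between:
  fixes f :: "real poly"
  assumes "card Z = Suc n" "Z \<subseteq> {a..b}" "\<forall>z\<in>Z. poly f z = 0"
  shows "\<exists>Z'. finite Z' \<and> card Z' = n \<and> Z' \<subseteq> {a<..<b} \<and> (\<forall>z\<in>Z'. poly (pderiv f) z = 0)"
  using assms
proof (induction n arbitrary: Z a)
  case 0
  then show ?case by (intro exI[of _ "{}"]) auto
next
  case (Suc n)
  have fin: "finite Z" and ne: "Z \<noteq> {}" using Suc.prems(1) card.infinite by fastforce+
  define m where "m = Min Z"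
  define Z1 where "Z1 = Z - {m}"
  have m: "m \<in> Z" using fin ne unfolding m_def by simp
  have card_Z1: "card Z1 = Suc n" using Suc.prems(1) m fin unfolding Z1_def by simp
  then have "Z1 \<noteq> {}" "finite Z1" using card.infinite by fastforce+
  then have m1: "Min Z1 \<in> Z1" by simp
  have "m \<le> Min Z1" "m \<noteq> Min Z1" using m1 fin unfolding Z1_def m_def by auto
  then have "m < Min Z1" by simp
  then obtain z0 where z0: "m < z0" "z0 < Min Z1" "poly (pderiv f) z0 = 0"
    using poly_MVT[of m "Min Z1" f] m m1 Suc.prems(3) unfolding Z1_def by auto
  have "Z1 \<subseteq> {Min Z1..b}"
    using Min_le[OF \<open>finite Z1\<close>] Suc.prems(2) by (auto simp: Z1_def subset_iff)
  moreover have "\<forall>z\<in>Z1. poly f z = 0" using Suc.prems(3) unfolding Z1_def by auto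
  ultimately obtain Z' where Z': "finite Z'" "card Z' = n" "Z' \<subseteq> {Min Z1<..<b}"
      "\<forall>z\<in>Z'. poly (pderiv f) z = 0"
    using Suc.IH[OF card_Z1] by blast
  have "a \<le> m" using m Suc.prems(2) by auto
  moreover have "z0 < b" using z0(2) m1 Suc.prems(2) unfolding Z1_def by auto
  moreover have "z0 \<notin> Z'" using Z'(3) z0(2) by auto
  ultimately show ?case using Z' z0 by (intro exI[of _ "insert z0 Z'"]) auto
qed

lemma higher_pderiv_rodrigues_at_endpoint:
  fixes a :: real
  assumes "j < c" "a = 1 \<or> a = -1"
  shows "poly ((pderiv ^^ j) ([:-1, 0, 1:] ^ c)) a = 0"
proof -
  have "[:-1, 0, 1:] = [:-a, 1:] * [:a, 1:]" using assms(2) by (auto simp: mult_pCons_left)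
  then have "[:-a, 1:] dvd [:-1, 0, 1:]" by (metis dvd_triv_left)
  then have "[:-a, 1:] ^ (c - j + j) dvd [:-1, 0, 1:] ^ c"
    using assms(1) by (simp add: dvd_power_same)
  then have "[:-a, 1:] ^ (c - j) dvd (pderiv ^^ j) ([:-1, 0, 1:] ^ c)"
    by (rule power_dvd_higher_pderiv)
  moreover have "[:-a, 1:] dvd [:-a, 1:] ^ (c - j)" using assms(1) by (simp add: dvd_power)
  ultimately show ?thesis by (metis dvd_trans poly_eq_0_iff_dvd)
qed

lemma higher_pderiv_rodrigues_roots:
  assumes "j \<le> c"
  shows "\<exists>Z. finite Z \<and> card Z = j \<and> Z \<subseteq> {-1<..<1}
             \<and> (\<forall>z\<in>Z. poly ((pderiv ^^ j) ([:-1, 0, 1:] ^ c :: real poly)) z = 0)"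
  using assms
proof (induction j)
  case 0
  then show ?case by (intro exI[of _ "{}"]) auto
next
  case (Suc j)
  then obtain Z where Z: "finite Z" "card Z = j" "Z \<subseteq> {-1<..<1}"
      "\<forall>z\<in>Z. poly ((pderiv ^^ j) ([:-1, 0, 1:] ^ c :: real poly)) z = 0" by auto
  have "-1 \<notin> Z" "1 \<notin> Z" using Z(3) by auto
  then have "card (insert (-1) (insert 1 Z)) = Suc (Suc j)" using Z(1,2) by simp
  moreover have "\<forall>z\<in>insert (-1) (insert 1 Z). poly ((pderiv ^^ j) ([:-1, 0, 1:] ^ c :: real poly)) z = 0"
    using Z(4) higher_pderiv_rodrigues_at_endpoint[of j c] Suc.prems by auto
  moreover have "insert (-1) (insert 1 Z) \<subseteq> {-1..1}" using Z(3) by auto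
  ultimately show ?case
    using pderiv_roots_between[of _ "Suc j" "-1" 1 "(pderiv ^^ j) ([:-1, 0, 1:] ^ c)"] by simp
qed

lemma higher_pderiv_rodrigues_orthogonal:
  assumes "j \<le> c" "degree q < j"
  shows "poly_integral ((pderiv ^^ j) ([:-1, 0, 1:] ^ c :: real poly) * q) = 0"
  using assms
proof (induction j arbitrary: q)
  case (Suc j)
  define v where "v = (pderiv ^^ j) ([:-1, 0, 1:] ^ c :: real poly)"
  have "poly v 1 = 0" "poly v (-1) = 0"
    unfolding v_def using higher_pderiv_rodrigues_at_endpoint[of j c] Suc.prems by auto
  then have by_parts: "poly_integral (pderiv v * q) = - poly_integral (v * pderiv q)"
    using poly_integral_pderiv[of "v * q"] by (simp add: pderiv_mult algebra_simps)
  have "poly_integral (v * pderiv q) = 0"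
  proof (cases "degree q = 0")
    case True
    then show ?thesis by (simp add: pderiv_eq_0_iff[THEN iffD2])
  next
    case False
    then show ?thesis unfolding v_def using Suc by (intro Suc.IH) (auto simp: degree_pderiv)
  qed
  then show ?case using by_parts unfolding v_def by simp
qed simp

lemma degree_legendre: "degree (legendre c) = c"
  unfolding legendre_def by (simp add: degree_higher_pderiv degree_power_eq)

lemma legendre_nonzero: "legendre c \<noteq> 0"
proof (cases c)
  case (Suc n)
  then show ?thesis using degree_legendre[of c] by auto
qed (simp add: legendre_def)

lemma legendre_orthogonal:
  assumes "degree q < c"
  shows "poly_integral (legendre c * q) = 0"
  using higher_pderiv_rodrigues_orthogonal[of c c q] assms
  unfolding legendre_def by (simp add: mult_smult_left)

definition legendre_nodes :: "nat \<Rightarrow> real set" where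
  "legendre_nodes c = {x. -1 < x \<and> x < 1 \<and> poly (legendre c) x = 0}"

lemma
  shows finite_legendre_nodes: "finite (legendre_nodes c)"
    and card_legendre_nodes: "card (legendre_nodes c) = c"
    and poly_legendre_eq_0_iff: "poly (legendre c) x = 0 \<longleftrightarrow> x \<in> legendre_nodes c"
proof -
  define R where "R = {x. poly (legendre c) x = 0}"
  have R: "finite R" "card R \<le> c"
    unfolding R_def using poly_roots_finite card_poly_roots_bound legendre_nonzero degree_legendre
    by metis+
  have sub: "legendre_nodes c \<subseteq> R" unfolding legendre_nodes_def R_def by auto
  obtain Z where Z: "finite Z" "card Z = c" "Z \<subseteq> legendre_nodes c"
    using higher_pderiv_rodrigues_roots[of c c]
    by (force simp: legendre_nodes_def legendre_def)
  show "finite (legendre_nodes c)" by (rule finite_subset[OF sub R(1)])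
  then have "c \<le> card (legendre_nodes c)" using Z card_mono by metis
  then show "card (legendre_nodes c) = c" using card_mono[OF R(1) sub] R(2) by simp
  then have "legendre_nodes c = R" using card_subset_eq[OF R(1) sub] card_mono[OF R(1) sub] R(2)
    by simp
  then show "poly (legendre c) x = 0 \<longleftrightarrow> x \<in> legendre_nodes c" unfolding R_def by auto
qed

lemma legendre_nodes_bounds: "x \<in> legendre_nodes c \<Longrightarrow> -1 < x \<and> x < 1"
  unfolding legendre_nodes_def by simp

lemma legendre_node_square_less_1: "x \<in> legendre_nodes c \<Longrightarrow> x\<^sup>2 < 1"
  using legendre_nodes_bounds[of x c] by (simp add: abs_square_less_1 abs_less_iff)

section \<open>Gauss--Legendre quadrature\<close>

definition legendre_quot :: "nat \<Rightarrow> real \<Rightarrow> real poly" where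
  "legendre_quot c a = synthetic_div (legendre c) a"

lemma legendre_eq_mult_quot:
  assumes "a \<in> legendre_nodes c"
  shows "legendre c = [:-a, 1:] * legendre_quot c a"
  using synthetic_div_correct'[of a "legendre c"] assms
  by (simp add: legendre_quot_def flip: poly_legendre_eq_0_iff)

lemma degree_legendre_quot: "degree (legendre_quot c a) = c - 1"
  by (simp add: legendre_quot_def degree_synthetic_div degree_legendre)

lemma lead_coeff_legendre_quot:
  assumes "a \<in> legendre_nodes c"
  shows "lead_coeff (legendre_quot c a) = lead_coeff (legendre c)"
proof -
  have "lead_coeff [:-a, 1:] = 1" by simp
  then show ?thesis by (metis lead_coeff_mult mult_1 legendre_eq_mult_quot[OF assms])
qed

lemma poly_legendre_quot_other_node:
  assumes "a \<in> legendre_nodes c" "b \<in> legendre_nodes c" "b \<noteq> a"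
  shows "poly (legendre_quot c a) b = 0"
proof -
  have "poly (legendre c) b = 0" using assms(2) by (simp add: poly_legendre_eq_0_iff)
  then have "(b - a) * poly (legendre_quot c a) b = 0"
    by (subst (asm) legendre_eq_mult_quot[OF assms(1)]) (simp add: algebra_simps)
  then show ?thesis using assms(3) by simp
qed

lemma poly_pderiv_legendre_node:
  assumes "a \<in> legendre_nodes c"
  shows "poly (pderiv (legendre c)) a = poly (legendre_quot c a) a"
  by (subst legendre_eq_mult_quot[OF assms]) (simp only: pderiv_mult, simp add: pderiv_pCons)

lemma legendre_nodes_nonempty_imp_pos: "a \<in> legendre_nodes c \<Longrightarrow> 0 < c"
  using card_legendre_nodes[of c] finite_legendre_nodes[of c] by (cases c) auto

lemma poly_pderiv_legendre_node_nonzero: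
  assumes "a \<in> legendre_nodes c"
  shows "poly (pderiv (legendre c)) a \<noteq> 0"
proof
  assume "poly (pderiv (legendre c)) a = 0"
  then have "\<And>b. b \<in> legendre_nodes c \<Longrightarrow> poly (legendre_quot c a) b = poly 0 b"
    using poly_legendre_quot_other_node[OF assms] poly_pderiv_legendre_node[OF assms] by auto
  then have "legendre_quot c a = 0"
    using legendre_nodes_nonempty_imp_pos[OF assms]
    by (intro poly_eqI_degree[of "legendre_nodes c"]) (auto simp: degree_legendre_quot card_legendre_nodes)
  then show False using legendre_eq_mult_quot[OF assms] legendre_nonzero by simp
qed

lemma lagrange_interpolation_legendre_nodes:
  assumes "degree f < c"
  shows "f = (\<Sum>a\<in>legendre_nodes c. smult (poly f a / poly (legendre_quot c a) a) (legendre_quot c a))"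
    (is "f = ?g")
proof (rule poly_eqI_degree)
  fix b assume b: "b \<in> legendre_nodes c"
  have "poly ?g b
      = (\<Sum>a\<in>legendre_nodes c. poly f a / poly (legendre_quot c a) a * poly (legendre_quot c a) b)"
    by (simp add: poly_sum)
  also have "\<dots> = poly f b / poly (legendre_quot c b) b * poly (legendre_quot c b) b"
    using b poly_legendre_quot_other_node
    by (subst sum.remove[OF finite_legendre_nodes b]) (auto intro!: sum.neutral)
  also have "\<dots> = poly f b"
    using poly_pderiv_legendre_node_nonzero[OF b] poly_pderiv_legendre_node[OF b] by simp
  finally show "poly f b = poly ?g b" ..
next
  have "degree ?g \<le> c - 1"
    by (intro degree_sum_le finite_legendre_nodes) (auto intro: order.trans[OF degree_smult_le] simp: degree_legendre_quot)
  then show "degree ?g < card (legendre_nodes c)" using assms by (simp add: card_legendre_nodes)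
qed (use assms in \<open>simp add: card_legendre_nodes\<close>)

definition christoffel :: "nat \<Rightarrow> real \<Rightarrow> real" where
  "christoffel c a = poly_integral (legendre_quot c a) / poly (legendre_quot c a) a"

definition gauss_sum :: "nat \<Rightarrow> (real \<Rightarrow> real) \<Rightarrow> real" where
  "gauss_sum c f = (\<Sum>a\<in>legendre_nodes c. christoffel c a * f a)"

theorem gauss_sum_poly:
  assumes "degree f < 2 * c"
  shows "gauss_sum c (poly f) = poly_integral f"
proof -
  define q r where "q = f div legendre c" and "r = f mod legendre c"
  have f: "f = legendre c * q + r" by (simp add: q_def r_def)
  have deg_r: "degree r < c"
    using degree_mod_less[OF legendre_nonzero, of f c] assms
    by (auto simp: r_def degree_legendre)
  have deg_q: "degree q < c"
  proof (cases "q = 0")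
    case False
    have "c + degree q = degree (f - r)"
      using False by (simp add: f degree_mult_eq legendre_nonzero degree_legendre)
    also have "\<dots> < 2 * c" using assms deg_r degree_diff_le_max[of f r] by linarith
    finally show ?thesis by simp
  qed (use assms in simp)
  have "poly_integral f = poly_integral r" using legendre_orthogonal[OF deg_q] by (simp add: f)
  also have "\<dots> = (\<Sum>a\<in>legendre_nodes c. christoffel c a * poly r a)"
    by (subst lagrange_interpolation_legendre_nodes[OF deg_r])
       (simp add: poly_integral_sum christoffel_def mult.commute)
  also have "\<dots> = gauss_sum c (poly f)"
    unfolding gauss_sum_def by (intro sum.cong) (simp_all add: f poly_legendre_eq_0_iff)
  finally show ?thesis ..
qed

lemma poly_integral_legendre_mult:
  assumes "degree h \<le> c"
  shows "poly_integral (legendre c * h)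
           = coeff h c / lead_coeff (legendre c) * poly_integral (legendre c * legendre c)"
proof -
  define k where "k = coeff h c / lead_coeff (legendre c)"
  have "poly_integral (legendre c * (h - smult k (legendre c))) = 0"
  proof (cases "h - smult k (legendre c) = 0")
    case False
    have "coeff (legendre c) c \<noteq> 0"
      using legendre_nonzero[of c] degree_legendre[of c] by (metis leading_coeff_0_iff)
    then have "coeff (h - smult k (legendre c)) c = 0" by (simp add: k_def degree_legendre)
    moreover have "degree (h - smult k (legendre c)) \<le> c"
      using assms degree_diff_le[of h c "smult k (legendre c)"] by (simp add: degree_legendre)
    ultimately have "degree (h - smult k (legendre c)) < c"
      using False by (metis le_neq_implies_less leading_coeff_0_iff)
    then show ?thesis by (rule legendre_orthogonal)
  qed simp
  then show ?thesis by (simp add: k_def algebra_simps)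
qed

lemma
  fixes X :: "real poly"
  assumes "X \<noteq> 0"
  shows degree_one_minus_square_mult: "degree ([:1, 0, -1:] * X) = degree X + 2"
    and lead_coeff_one_minus_square_mult: "lead_coeff ([:1, 0, -1:] * X) = - lead_coeff X"
proof -
  have "degree ([:1, 0, -1:] :: real poly) = 2" "lead_coeff [:1, 0, -1:] = (-1::real)" by simp_all
  with assms show "degree ([:1, 0, -1:] * X) = degree X + 2"
    by (simp add: degree_mult_eq del: mult_pCons_left)
  from \<open>lead_coeff [:1, 0, -1:] = -1\<close> show "lead_coeff ([:1, 0, -1:] * X) = - lead_coeff X"
    by (simp add: lead_coeff_mult del: mult_pCons_left)
qed

lemma poly_integral_legendre_quot_mult:
  assumes "a \<in> legendre_nodes c"
  shows "poly_integral (legendre_quot c a * ([:1, 0, -1:] * pderiv (legendre c)))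
           = (real c + 1) * poly_integral (legendre c * legendre c)"
proof -
  define m where "m = [:1, 0, -1:] * legendre_quot c a"
  have c: "0 < c" using legendre_nodes_nonempty_imp_pos[OF assms] .
  have "legendre_quot c a \<noteq> 0" using legendre_eq_mult_quot[OF assms] legendre_nonzero by auto
  then have "lead_coeff m = - lead_coeff (legendre c)" "degree m = Suc c"
    using lead_coeff_one_minus_square_mult degree_one_minus_square_mult lead_coeff_legendre_quot[OF assms]
      degree_legendre_quot[of c a] c
    unfolding m_def by (metis, simp del: mult_pCons_left)
  then have "degree (pderiv m) = c" "coeff (pderiv m) c = - (real c + 1) * lead_coeff (legendre c)"
    by (simp_all add: degree_pderiv coeff_pderiv algebra_simps)
  then have I: "poly_integral (legendre c * pderiv m) = - (real c + 1) * poly_integral (legendre c * legendre c)"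
    using legendre_nonzero[of c] by (simp add: poly_integral_legendre_mult)
  have "poly m 1 = 0" "poly m (-1) = 0" by (simp_all add: m_def)
  then have by_parts: "poly_integral (m * pderiv (legendre c)) = - poly_integral (legendre c * pderiv m)"
    using poly_integral_pderiv[of "m * legendre c"] by (simp add: pderiv_mult algebra_simps)
  have "poly_integral (legendre_quot c a * ([:1, 0, -1:] * pderiv (legendre c)))
      = poly_integral (m * pderiv (legendre c))"
    by (simp only: m_def ac_simps)
  also have "\<dots> = (real c + 1) * poly_integral (legendre c * legendre c)"
    using by_parts I by (simp add: algebra_simps)
  finally show ?thesis .
qed

lemma poly_integral_legendre_mult_synthetic_div:
  assumes "0 < c"
  shows "poly_integral (legendre c * synthetic_div ([:1, 0, -1:] * pderiv (legendre c)) a)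
           = - real c * poly_integral (legendre c * legendre c)"
proof -
  define D where "D = [:1, 0, -1:] * pderiv (legendre c)"
  define Q where "Q = synthetic_div D a"
  have "pderiv (legendre c) \<noteq> 0"
    using assms by (simp add: pderiv_eq_0_iff degree_legendre)
  then have lead_D: "lead_coeff D = - lead_coeff (pderiv (legendre c))"
    and deg_D: "degree D = Suc c"
    using assms lead_coeff_one_minus_square_mult degree_one_minus_square_mult
    unfolding D_def by (metis, simp add: degree_pderiv degree_legendre del: mult_pCons_left)
  have "lead_coeff (pderiv (legendre c)) = c * lead_coeff (legendre c)"
    using assms by (simp add: degree_pderiv coeff_pderiv degree_legendre)
  with lead_D have lead_D: "lead_coeff D = - c * lead_coeff (legendre c)" by simp
  have deg_Q: "degree Q = c" using deg_D by (simp add: Q_def degree_synthetic_div)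
  have "coeff D (Suc c) = coeff Q c - a * coeff Q (Suc c)"
    using arg_cong[OF synthetic_div_correct'[of a D], of "\<lambda>p. coeff p (Suc c)"]
    by (simp add: Q_def)
  then have "coeff Q c = - c * lead_coeff (legendre c)"
    using lead_D deg_D deg_Q by (simp add: coeff_eq_0)
  then show ?thesis
    using deg_Q legendre_nonzero[of c] by (simp add: poly_integral_legendre_mult D_def Q_def)
qed

lemma christoffel_identity:
  assumes "a \<in> legendre_nodes c"
  shows "(1 - a\<^sup>2) * poly (pderiv (legendre c)) a * poly_integral (legendre_quot c a)
           = (2 * real c + 1) * poly_integral (legendre c * legendre c)"
proof -
  define D where "D = [:1, 0, -1:] * pderiv (legendre c)"
  have "legendre c * synthetic_div D a = legendre_quot c a * (D - [:poly D a:])"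
    using synthetic_div_correct'[of a D] legendre_eq_mult_quot[OF assms]
    by (metis add_diff_cancel_right' mult.assoc mult.commute)
  then have "poly_integral (legendre c * synthetic_div D a)
      = poly_integral (legendre_quot c a * D) - poly D a * poly_integral (legendre_quot c a)"
    by (simp add: right_diff_distrib)
  moreover have "poly_integral (legendre_quot c a * D) = (real c + 1) * poly_integral (legendre c * legendre c)"
    unfolding D_def by (rule poly_integral_legendre_quot_mult[OF assms])
  moreover have "poly_integral (legendre c * synthetic_div D a) = - real c * poly_integral (legendre c * legendre c)"
    unfolding D_def by (rule poly_integral_legendre_mult_synthetic_div[OF legendre_nodes_nonempty_imp_pos[OF assms]])
  moreover have "poly D a = (1 - a\<^sup>2) * poly (pderiv (legendre c)) a"
    by (simp add: D_def power2_eq_square algebra_simps)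
  ultimately show ?thesis by (simp add: algebra_simps)
qed

text \<open>With the Rodrigues normalisation the factor \<open>(2c + 1)/2 \<cdot> \<integral>P\<^sub>c\<^sup>2\<close> equals 1; only its
  independence of the node is used below.\<close>

lemma christoffel_eq:
  assumes "a \<in> legendre_nodes c"
  shows "christoffel c a
           = (2 * real c + 1) * poly_integral (legendre c * legendre c)
             / ((1 - a\<^sup>2) * (poly (pderiv (legendre c)) a)\<^sup>2)"
proof -
  define d where "d = poly (pderiv (legendre c)) a"
  have "a\<^sup>2 < 1" using legendre_node_square_less_1[OF assms] .
  moreover have "d \<noteq> 0" using poly_pderiv_legendre_node_nonzero[OF assms] by (simp add: d_def)
  ultimately have "(2 * real c + 1) * poly_integral (legendre c * legendre c) / ((1 - a\<^sup>2) * d\<^sup>2)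
      = ((1 - a\<^sup>2) * d) * poly_integral (legendre_quot c a) / (((1 - a\<^sup>2) * d) * d)"
    using christoffel_identity[OF assms] by (simp add: d_def power2_eq_square ac_simps)
  also have "\<dots> = christoffel c a"
    using \<open>d \<noteq> 0\<close> \<open>a\<^sup>2 < 1\<close> poly_pderiv_legendre_node[OF assms]
    by (simp add: christoffel_def d_def)
  finally show ?thesis by (simp add: d_def ac_simps)
qed

lemma christoffel_pos:
  assumes "a \<in> legendre_nodes c"
  shows "christoffel c a > 0"
proof -
  have "a\<^sup>2 < 1" using legendre_node_square_less_1[OF assms] .
  then show ?thesis
    using poly_integral_square_pos[OF legendre_nonzero] poly_pderiv_legendre_node_nonzero[OF assms]
    by (simp add: christoffel_eq[OF assms])
qed

lemma gauss_sum_mono: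
  assumes "\<And>x. x \<in> legendre_nodes c \<Longrightarrow> f x \<le> g x"
  shows "gauss_sum c f \<le> gauss_sum c g"
  unfolding gauss_sum_def using assms christoffel_pos
  by (intro sum_mono mult_left_mono) (auto intro: less_imp_le)

lemma gauss_sum_cong:
  assumes "\<And>x. x \<in> legendre_nodes c \<Longrightarrow> f x = g x"
  shows "gauss_sum c f = gauss_sum c g"
  unfolding gauss_sum_def using assms by simp

lemma gauss_sum_add: "gauss_sum c (\<lambda>x. f x + g x) = gauss_sum c f + gauss_sum c g"
  unfolding gauss_sum_def by (simp add: sum.distrib distrib_left)

lemma gauss_sum_cmult: "gauss_sum c (\<lambda>x. k * f x) = k * gauss_sum c f"
  unfolding gauss_sum_def by (simp add: sum_distrib_left ac_simps)

lemma gauss_sum_const: "0 < c \<Longrightarrow> gauss_sum c (\<lambda>x. k) = 2 * k"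
  using gauss_sum_poly[of "[:k:]" c] by (simp add: gauss_sum_def)

lemma gauss_sum_sums:
  assumes "\<And>x. x \<in> legendre_nodes c \<Longrightarrow> summable (\<lambda>j. F j x)"
  shows "(\<lambda>j. gauss_sum c (F j)) sums gauss_sum c (\<lambda>x. \<Sum>j. F j x)"
  unfolding gauss_sum_def using assms by (intro sums_sum sums_mult summable_sums)

section \<open>Convergence of the quadrature sums\<close>

lemma gauss_sum_poly_approx:
  assumes "\<And>x. x \<in> {-1..1} \<Longrightarrow> \<bar>f x - poly p x\<bar> \<le> e" "degree p < 2 * c"
  shows "\<bar>gauss_sum c f - poly_integral p\<bar> \<le> 2 * e"
proof -
  have c: "0 < c" using assms(2) by simp
  have bounds: "poly p x - e \<le> f x" "f x \<le> poly p x + e" if "x \<in> legendre_nodes c" for x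
    using assms(1)[of x] legendre_nodes_bounds[OF that] by auto
  have "gauss_sum c f \<le> gauss_sum c (\<lambda>x. poly p x + e)"
    using bounds by (intro gauss_sum_mono) auto
  also have "\<dots> = poly_integral p + 2 * e"
    using assms(2) c by (simp add: gauss_sum_add gauss_sum_poly gauss_sum_const)
  finally have upper: "gauss_sum c f \<le> poly_integral p + 2 * e" .
  have "poly_integral p - 2 * e = gauss_sum c (\<lambda>x. poly p x + (- e))"
    by (simp only: gauss_sum_add gauss_sum_poly[OF assms(2)] gauss_sum_const[OF c])
  also have "\<dots> \<le> gauss_sum c f"
    using bounds by (intro gauss_sum_mono) auto
  finally show ?thesis using upper by (simp add: abs_le_iff)
qed

lemma continuous_on_poly_approx:
  fixes f :: "real \<Rightarrow> real"
  assumes "continuous_on {a..b} f" "0 < e"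
  obtains p where "\<And>x. x \<in> {a..b} \<Longrightarrow> \<bar>f x - poly p x\<bar> < e"
proof -
  obtain g where g: "real_polynomial_function g" "\<And>x. x \<in> {a..b} \<Longrightarrow> \<bar>f x - g x\<bar> < e"
    using Stone_Weierstrass_real_polynomial_function[of "{a..b}" f e] assms by auto
  obtain a n where "g = (\<lambda>x. \<Sum>i\<le>n. a i * x ^ i)"
    using g(1) real_polynomial_function_iff_sum by auto
  then have "g = poly (\<Sum>i\<le>n. monom (a i) i)" by (simp add: fun_eq_iff poly_sum poly_monom)
  then show ?thesis using g(2) that by blast
qed

theorem gauss_sum_tendsto_integral:
  assumes "continuous_on {-1..1} f"
  shows "(\<lambda>c. gauss_sum c f) \<longlonglongrightarrow> integral {-1..1} f"
proof (rule LIMSEQ_I)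
  fix r :: real assume "0 < r"
  then obtain p where p: "\<And>x. x \<in> {-1..1} \<Longrightarrow> \<bar>f x - poly p x\<bar> < r / 5"
    using continuous_on_poly_approx[OF assms] by (metis divide_pos_pos zero_less_numeral)
  have "norm (integral {-1..1} (\<lambda>x. f x - poly p x)) \<le> r / 5 * (1 - -1)"
    by (rule integral_bound) (use p assms in \<open>auto intro!: continuous_intros less_imp_le\<close>)
  then have integral_approx: "\<bar>integral {-1..1} f - poly_integral p\<bar> \<le> 2 * (r / 5)"
    using assms by (simp add: poly_integral_def integral_diff integrable_continuous_real)
  show "\<exists>c0. \<forall>c\<ge>c0. norm (gauss_sum c f - integral {-1..1} f) < r"
  proof (intro exI allI impI)
    fix c assume "degree p + 1 \<le> c"
    then have "\<bar>gauss_sum c f - poly_integral p\<bar> \<le> 2 * (r / 5)"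
      using p by (intro gauss_sum_poly_approx) (auto intro: less_imp_le)
    then show "norm (gauss_sum c f - integral {-1..1} f) < r"
      using integral_approx \<open>0 < r\<close> unfolding real_norm_def
      by (simp only: abs_le_iff abs_less_iff) linarith
  qed
qed

section \<open>The Chebyshev weight near the endpoints\<close>

lemma interpolant_inverse_linear:
  fixes P :: "real poly"
  assumes "poly P w \<noteq> 0" "0 < degree P"
  obtains T where "degree T < 2 * degree P"
    and "\<And>x. x \<noteq> w \<Longrightarrow> poly T x = (1 - (poly P x / poly P w)\<^sup>2) / (w - x)"
proof
  define D where "D = [:(poly P w)\<^sup>2:] - P\<^sup>2"
  define T where "T = smult (- 1 / (poly P w)\<^sup>2) (synthetic_div D w)"
  have "degree (P\<^sup>2) \<le> 2 * degree P" using degree_power_le[of P 2] by (simp add: mult.commute)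
  then have "degree D \<le> 2 * degree P"
    unfolding D_def using degree_diff_le_max[of "[:(poly P w)\<^sup>2:]" "P\<^sup>2"] by simp
  moreover have "degree T \<le> degree D - 1"
    unfolding T_def by (metis degree_smult_le degree_synthetic_div)
  ultimately show "degree T < 2 * degree P" using assms(2) by linarith
  fix x assume "x \<noteq> w"
  have "poly D w = 0" by (simp add: D_def)
  then have q: "(x - w) * poly (synthetic_div D w) x = (poly P w)\<^sup>2 - (poly P x)\<^sup>2"
    using arg_cong[OF synthetic_div_correct'[of w D], of "\<lambda>p. poly p x"] by (simp add: D_def algebra_simps)
  have "(1 - (poly P x / poly P w)\<^sup>2) / (w - x)
      = - (((poly P w)\<^sup>2 - (poly P x)\<^sup>2) / (x - w)) / (poly P w)\<^sup>2"
    using assms(1) \<open>x \<noteq> w\<close> by (simp add: field_simps power_divide)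
  also have "\<dots> = poly T x" using \<open>x \<noteq> w\<close> by (simp add: T_def flip: q)
  finally show "poly T x = (1 - (poly P x / poly P w)\<^sup>2) / (w - x)" ..
qed

lemma inverse_linear_has_integral:
  fixes z s :: real
  assumes "1 < z" "s = 1 \<or> s = -1"
  shows "((\<lambda>x. 1 / (z - s * x)) has_integral ln ((z + 1) / (z - 1))) {-1..1}"
proof -
  have "((\<lambda>x. 1 / (z - s * x)) has_integral (- s * ln (z - s * 1) - - s * ln (z - s * -1))) {-1..1}"
  proof (rule fundamental_theorem_of_calculus[of _ _ "\<lambda>x. - s * ln (z - s * x)"])
    fix x :: real assume "x \<in> {-1..1}"
    then have "0 < z - s * x" using assms by auto
    then have "((\<lambda>x. - s * ln (z - s * x)) has_real_derivative 1 / (z - s * x)) (at x)"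
      using assms(2) by (elim disjE) (auto intro!: derivative_eq_intros simp: field_simps)
    then show "((\<lambda>x. - s * ln (z - s * x)) has_vector_derivative 1 / (z - s * x)) (at x within {-1..1})"
      by (simp add: has_real_derivative_iff_has_vector_derivative[symmetric] has_field_derivative_at_within)
  qed simp
  then show ?thesis using assms by (auto simp: ln_div)
qed

lemma gauss_sum_inverse_linear_le:
  fixes z s :: real
  assumes "0 < c" "1 < z" "s = 1 \<or> s = -1"
  shows "gauss_sum c (\<lambda>x. 1 / (z - s * x)) \<le> ln ((z + 1) / (z - 1))"
proof -
  define P w where "P = legendre c" and "w = s * z"
  have "w \<notin> legendre_nodes c" using assms legendre_nodes_bounds[of w c] by (auto simp: w_def)
  then obtain T where T: "degree T < 2 * c"
    "\<And>x. x \<noteq> w \<Longrightarrow> poly T x = (1 - (poly P x / poly P w)\<^sup>2) / (w - x)"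
    using interpolant_inverse_linear[of P w] assms(1)
    by (auto simp: P_def degree_legendre poly_legendre_eq_0_iff)
  have T': "poly (smult s T) x = (1 - (poly P x / poly P w)\<^sup>2) / (z - s * x)" if "x \<noteq> w" for x
    using assms(3) T(2)[OF that] that by (auto simp: w_def divide_simps algebra_simps)
  have "gauss_sum c (\<lambda>x. 1 / (z - s * x)) = gauss_sum c (poly (smult s T))"
  proof (rule gauss_sum_cong)
    fix x assume "x \<in> legendre_nodes c"
    then have "x \<noteq> w" "poly P x = 0"
      using \<open>w \<notin> legendre_nodes c\<close> by (auto simp: P_def poly_legendre_eq_0_iff)
    then show "1 / (z - s * x) = poly (smult s T) x" using T' by simp
  qed
  also have "\<dots> = poly_integral (smult s T)"
    using T(1) degree_smult_le[of s T] by (intro gauss_sum_poly) linarith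
  also have "\<dots> \<le> integral {-1..1} (\<lambda>x. 1 / (z - s * x))"
    unfolding poly_integral_def
  proof (rule integral_le)
    fix x :: real assume "x \<in> {-1..1}"
    then have "0 < z - s * x" "x \<noteq> w" using assms by (auto simp: w_def)
    then show "poly (smult s T) x \<le> 1 / (z - s * x)"
      unfolding T'[OF \<open>x \<noteq> w\<close>] by (intro divide_right_mono) auto
  qed (use inverse_linear_has_integral[OF assms(2,3)] in auto)
  also have "\<dots> = ln ((z + 1) / (z - 1))"
    using inverse_linear_has_integral[OF assms(2,3)] by (rule integral_unique)
  finally show ?thesis .
qed

lemma gauss_sum_inverse_quadratic_le:
  assumes "0 < c" "0 < s" "s \<le> 1"
  shows "gauss_sum c (\<lambda>x. 1 / (1 - x\<^sup>2 + s)) \<le> ln (7 / s)"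
proof -
  define z where "z = 1 + s / 3"
  have z: "1 < z" using assms by (simp add: z_def)
  have "gauss_sum c (\<lambda>x. 1 / (1 - x\<^sup>2 + s))
      \<le> gauss_sum c (\<lambda>x. 1 / 2 * (1 / (z - 1 * x)) + 1 / 2 * (1 / (z - -1 * x)))"
  proof (rule gauss_sum_mono)
    fix x assume "x \<in> legendre_nodes c"
    then have "x\<^sup>2 < 1" by (rule legendre_node_square_less_1)
    have "s * s \<le> s" using assms by (simp add: mult_le_cancel_left1)
    then have "(z - x) * (z + x) \<le> 1 - x\<^sup>2 + s"
      unfolding z_def power2_eq_square by (simp add: field_simps) (use assms in linarith)
    moreover have "0 < z - x" "0 < z + x"
      using \<open>x\<^sup>2 < 1\<close> z by (auto simp: abs_square_less_1 abs_less_iff)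
    moreover have "0 < 1 - x\<^sup>2 + s" using \<open>x\<^sup>2 < 1\<close> assms by simp
    ultimately have "1 / (1 - x\<^sup>2 + s) \<le> 1 / ((z - x) * (z + x))"
      by (intro divide_left_mono) auto
    also have "\<dots> \<le> z / ((z - x) * (z + x))"
      using \<open>0 < z - x\<close> \<open>0 < z + x\<close> z by (intro divide_right_mono) auto
    also have "\<dots> = 1 / 2 * (1 / (z - 1 * x)) + 1 / 2 * (1 / (z - -1 * x))"
      using \<open>0 < z - x\<close> \<open>0 < z + x\<close> by (simp add: divide_simps) (simp add: algebra_simps)
    finally show "1 / (1 - x\<^sup>2 + s) \<le> 1 / 2 * (1 / (z - 1 * x)) + 1 / 2 * (1 / (z - -1 * x))" .
  qed
  also have "\<dots> \<le> 1 / 2 * ln ((z + 1) / (z - 1)) + 1 / 2 * ln ((z + 1) / (z - 1))"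
    unfolding gauss_sum_add gauss_sum_cmult
    using gauss_sum_inverse_linear_le[OF assms(1) z, of 1] gauss_sum_inverse_linear_le[OF assms(1) z, of "-1"]
    by simp
  also have "\<dots> \<le> ln (7 / s)"
  proof -
    have "(z + 1) / (z - 1) = (6 + s) / s" using assms by (simp add: z_def field_simps)
    also have "\<dots> \<le> 7 / s" using assms by (intro divide_right_mono) auto
    finally show ?thesis using z assms by simp
  qed
  finally show ?thesis .
qed

definition chebyshev_weight :: "real \<Rightarrow> real" where
  "chebyshev_weight x = 1 / sqrt (1 - x\<^sup>2)"

lemma chebyshev_weight_nonneg: "x\<^sup>2 \<le> 1 \<Longrightarrow> 0 \<le> chebyshev_weight x"
  by (simp add: chebyshev_weight_def)

lemma chebyshev_weight_has_integral:
  assumes "-1 \<le> u" "u \<le> v" "v \<le> 1"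
  shows "(chebyshev_weight has_integral (arcsin v - arcsin u)) {u..v}"
proof (rule fundamental_theorem_of_calculus_interior[OF assms(2)])
  show "continuous_on {u..v} arcsin"
    using assms by (intro continuous_on_subset[OF continuous_on_arcsin']) auto
  fix x assume "x \<in> {u<..<v}"
  then have "-1 < x" "x < 1" using assms by auto
  then show "(arcsin has_vector_derivative chebyshev_weight x) (at x)"
    using DERIV_arcsin[of x]
    by (simp add: chebyshev_weight_def divide_inverse has_real_derivative_iff_has_vector_derivative[symmetric])
qed

lemma ex_power_bracket:
  fixes r y :: real
  assumes "0 < r" "r < 1" "0 < y" "y \<le> r ^ J"
  obtains j where "J \<le> j" "r ^ Suc j < y" "y \<le> r ^ j"
proof -
  define m where "m = (LEAST n. r ^ n < y)"
  have m: "r ^ m < y"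
    unfolding m_def by (rule LeastI_ex) (use real_arch_pow_inv[OF assms(3,2)] in blast)
  have "J < m"
  proof (rule ccontr)
    assume "\<not> J < m"
    then have "r ^ J \<le> r ^ m" using assms(1,2) by (intro power_decreasing) auto
    then show False using m assms(4) by linarith
  qed
  moreover have "\<not> r ^ (m - 1) < y" unfolding m_def by (rule not_less_Least) (use \<open>J < m\<close> m_def in simp)
  ultimately show thesis using that[of "m - 1"] m by simp
qed

lemma summable_dyadic_kernel:
  fixes y :: real
  assumes "0 < y"
  shows "summable (\<lambda>n. (1/2) ^ (n + J) / (y + (1/4) ^ (n + J)))"
proof (rule summable_comparison_test')
  show "summable (\<lambda>n. (1/2::real) ^ J / y * (1/2) ^ n)"
    by (intro summable_mult summable_geometric) simp
  fix n
  have "(1/2) ^ (n + J) / (y + (1/4) ^ (n + J)) \<le> (1/2::real) ^ (n + J) / y"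
    using assms by (intro divide_left_mono mult_pos_pos add_pos_nonneg) auto
  then show "norm ((1/2) ^ (n + J) / (y + (1/4) ^ (n + J))) \<le> (1/2::real) ^ J / y * (1/2) ^ n"
    using assms by (simp add: power_add ac_simps)
qed

lemma inverse_sqrt_le_dyadic_sum:
  fixes y :: real
  assumes "0 < y" "y \<le> (1/4) ^ J"
  shows "1 / sqrt y \<le> 4 * (\<Sum>n. (1/2) ^ (n + J) / (y + (1/4) ^ (n + J)))"
proof -
  obtain j where j: "J \<le> j" "(1/4) ^ Suc j < y" "y \<le> (1/4) ^ j"
    using ex_power_bracket[of "1/4" y J] assms by auto
  define h :: real where "h = (1/2) ^ j"
  have h: "0 < h" "(1/4) ^ j = h\<^sup>2" by (simp_all add: h_def power2_eq_square flip: power_mult_distrib)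
  have "(h / 2)\<^sup>2 < y" using j(2) h(2) by (simp add: power2_eq_square)
  then have "h / 2 < sqrt y" by (rule real_less_rsqrt)
  then have "1 / sqrt y < 2 / h" using h(1) assms(1) by (simp add: field_simps)
  also have "\<dots> = 4 * h / (2 * h\<^sup>2)" using h(1) by (simp add: power2_eq_square)
  also have "\<dots> \<le> 4 * h / (y + h\<^sup>2)" using j(3) h assms(1) by (intro divide_left_mono) auto
  also have "\<dots> = 4 * ((1/2) ^ ((j - J) + J) / (y + (1/4) ^ ((j - J) + J)))"
    using j(1) h(2) by (simp add: h_def)
  also have "\<dots> \<le> 4 * (\<Sum>n. (1/2) ^ (n + J) / (y + (1/4) ^ (n + J)))"
    using sum_le_suminf[OF summable_dyadic_kernel[OF assms(1), of J], of "{j - J}"] assms(1)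
    by (intro mult_left_mono) simp_all
  finally show ?thesis by simp
qed

text \<open>Crude, but any bound linear in \<open>m\<close> makes the dyadic series converge.\<close>

lemma ln_div_quarter_power_le: "ln (7 / (1/4) ^ m) \<le> 7 * real (Suc m)"
proof -
  have "ln (7 / (1/4) ^ m) = ln 7 + real m * ln 4"
    by (simp add: power_one_over ln_mult ln_realpow)
  also have "\<dots> \<le> 7 + real m * 4"
    by (intro add_mono mult_left_mono less_imp_le[OF ln_less_self]) simp_all
  finally show ?thesis by simp
qed

lemma summable_Suc_mult_half_power: "summable (\<lambda>n. real (Suc (n + J)) * (1/2) ^ (n + J))"
  using summable_ignore_initial_segment[OF sums_summable[OF geometric_deriv_sums[of "1/2::real"]], of J]
  by simp

lemma gauss_sum_chebyshev_near_endpoints_le: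
  assumes "0 < c"
  shows "gauss_sum c (\<lambda>x. if 1 - x\<^sup>2 \<le> (1/4) ^ J then chebyshev_weight x else 0)
           \<le> 28 * (\<Sum>n. real (Suc (n + J)) * (1/2) ^ (n + J))"
proof -
  define K :: "nat \<Rightarrow> real \<Rightarrow> real"
    where "K n x = (1/2) ^ (n + J) / (1 - x\<^sup>2 + (1/4) ^ (n + J))" for n x
  have pos: "0 < 1 - x\<^sup>2" if "x \<in> legendre_nodes c" for x
    using legendre_node_square_less_1[OF that] by simp
  have K_sums: "(\<lambda>n. gauss_sum c (K n)) sums gauss_sum c (\<lambda>x. \<Sum>n. K n x)"
    using summable_dyadic_kernel pos unfolding K_def by (intro gauss_sum_sums) auto
  have K_le: "gauss_sum c (K n) \<le> 7 * (real (Suc (n + J)) * (1/2) ^ (n + J))" for n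
  proof -
    have "gauss_sum c (K n) = (1/2) ^ (n + J) * gauss_sum c (\<lambda>x. 1 / (1 - x\<^sup>2 + (1/4) ^ (n + J)))"
      unfolding K_def by (simp flip: gauss_sum_cmult)
    also have "\<dots> \<le> (1/2) ^ (n + J) * ln (7 / (1/4) ^ (n + J))"
      using assms by (intro mult_left_mono gauss_sum_inverse_quadratic_le) (auto simp: power_le_one)
    also have "\<dots> \<le> (1/2) ^ (n + J) * (7 * real (Suc (n + J)))"
      by (intro mult_left_mono ln_div_quarter_power_le) simp
    finally show ?thesis by (simp add: algebra_simps)
  qed
  have "gauss_sum c (\<lambda>x. if 1 - x\<^sup>2 \<le> (1/4) ^ J then chebyshev_weight x else 0)
      \<le> gauss_sum c (\<lambda>x. 4 * (\<Sum>n. K n x))"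
  proof (rule gauss_sum_mono)
    fix x assume x: "x \<in> legendre_nodes c"
    have "0 \<le> (\<Sum>n. K n x)"
      using summable_dyadic_kernel pos[OF x] unfolding K_def by (intro suminf_nonneg) auto
    then show "(if 1 - x\<^sup>2 \<le> (1/4) ^ J then chebyshev_weight x else 0) \<le> 4 * (\<Sum>n. K n x)"
      using inverse_sqrt_le_dyadic_sum[OF pos[OF x]] unfolding K_def chebyshev_weight_def by auto
  qed
  also have "\<dots> = 4 * (\<Sum>n. gauss_sum c (K n))"
    using K_sums by (simp add: gauss_sum_cmult sums_iff)
  also have "\<dots> \<le> 4 * (\<Sum>n. 7 * (real (Suc (n + J)) * (1/2) ^ (n + J)))"
    using K_sums K_le summable_mult[OF summable_Suc_mult_half_power[of J], of 7]
    by (intro mult_left_mono suminf_le) (auto simp: sums_iff)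
  also have "\<dots> = 28 * (\<Sum>n. real (Suc (n + J)) * (1/2) ^ (n + J))"
    using suminf_mult[OF summable_Suc_mult_half_power[of J], of 7] by simp
  finally show ?thesis .
qed

definition chebyshev_trunc :: "real \<Rightarrow> real \<Rightarrow> real" where
  "chebyshev_trunc \<eta> x = 1 / sqrt (max (1 - x\<^sup>2) \<eta>)"

lemma continuous_on_chebyshev_trunc: "0 < \<eta> \<Longrightarrow> continuous_on S (chebyshev_trunc \<eta>)"
  unfolding chebyshev_trunc_def by (intro continuous_intros) (auto simp: max_def)

lemma chebyshev_trunc_nonneg: "0 < \<eta> \<Longrightarrow> 0 \<le> chebyshev_trunc \<eta> x"
  by (simp add: chebyshev_trunc_def)

lemma chebyshev_trunc_le: "0 < 1 - x\<^sup>2 \<Longrightarrow> chebyshev_trunc \<eta> x \<le> chebyshev_weight x"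
  unfolding chebyshev_trunc_def chebyshev_weight_def by (intro divide_left_mono) auto

lemma chebyshev_trunc_eq: "\<eta> \<le> 1 - x\<^sup>2 \<Longrightarrow> chebyshev_trunc \<eta> x = chebyshev_weight x"
  by (simp add: chebyshev_trunc_def chebyshev_weight_def max_absorb1)

lemma integral_chebyshev_trunc_le:
  assumes "0 < \<eta>"
  shows "integral {-1..1} (chebyshev_trunc \<eta>) \<le> pi"
proof -
  have cheb: "(chebyshev_weight has_integral pi) {-1<..<1}"
    using chebyshev_weight_has_integral[of "-1" 1] by (simp add: has_integral_Icc_iff_Ioo)
  have "integral {-1<..<1} (chebyshev_trunc \<eta>) \<le> integral {-1<..<1} chebyshev_weight"
  proof (rule integral_le)
    show "chebyshev_trunc \<eta> integrable_on {-1<..<1}"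
      using assms by (simp add: integrable_on_open_interval_real integrable_continuous_real
          continuous_on_chebyshev_trunc)
    fix x :: real assume "x \<in> {-1<..<1}"
    then show "chebyshev_trunc \<eta> x \<le> chebyshev_weight x"
      by (intro chebyshev_trunc_le) (simp add: abs_square_less_1 abs_less_iff)
  qed (use cheb in blast)
  then show ?thesis using cheb by (simp add: integral_open_interval_real integral_unique)
qed

lemma eventually_gauss_sum_chebyshev_le:
  assumes "0 < e"
  shows "eventually (\<lambda>c. gauss_sum c chebyshev_weight \<le> pi + e) sequentially"
proof -
  have "(\<lambda>J. 28 * (\<Sum>n. real (Suc (n + J)) * (1/2) ^ (n + J))) \<longlonglongrightarrow> 0"
    using tendsto_mult_right_zero[OF suminf_exist_split2[OF summable_Suc_mult_half_power[of 0]], of 28]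
    by simp
  then obtain J where J: "28 * (\<Sum>n. real (Suc (n + J)) * (1/2) ^ (n + J)) < e / 2"
    using assms by (metis (lifting) eventually_sequentially half_gt_zero order_refl order_tendstoD(2))
  define \<eta> :: real where "\<eta> = (1/4) ^ J"
  have \<eta>: "0 < \<eta>" by (simp add: \<eta>_def)
  have "eventually (\<lambda>c. gauss_sum c (chebyshev_trunc \<eta>) < integral {-1..1} (chebyshev_trunc \<eta>) + e / 2)
      sequentially"
    using assms
    by (intro order_tendstoD(2)[OF gauss_sum_tendsto_integral[OF continuous_on_chebyshev_trunc[OF \<eta>]]]) simp
  then show ?thesis
    using eventually_gt_at_top[of 0]
  proof eventually_elim
    case (elim c)
    have "gauss_sum c chebyshev_weight
        \<le> gauss_sum c (\<lambda>x. chebyshev_trunc \<eta> x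
                            + (if 1 - x\<^sup>2 \<le> (1/4) ^ J then chebyshev_weight x else 0))"
      using chebyshev_trunc_eq[of \<eta>] chebyshev_trunc_nonneg[OF \<eta>]
      by (intro gauss_sum_mono) (auto simp: \<eta>_def)
    also have "\<dots> \<le> pi + e"
      using elim J gauss_sum_chebyshev_near_endpoints_le[OF elim(2), of J] integral_chebyshev_trunc_le[OF \<eta>]
      unfolding gauss_sum_add by linarith
    finally show ?case .
  qed
qed

definition trapezoid :: "real \<Rightarrow> real \<Rightarrow> real \<Rightarrow> real \<Rightarrow> real" where
  "trapezoid \<alpha> \<beta> \<delta> x = max 0 (min 1 (min ((x - \<alpha>) / \<delta>) ((\<beta> - x) / \<delta>)))"

lemma trapezoid_bounds: "0 \<le> trapezoid \<alpha> \<beta> \<delta> x" "trapezoid \<alpha> \<beta> \<delta> x \<le> 1"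
  unfolding trapezoid_def by auto

lemma trapezoid_eq_0:
  assumes "0 < \<delta>" "x \<le> \<alpha> \<or> \<beta> \<le> x"
  shows "trapezoid \<alpha> \<beta> \<delta> x = 0"
proof -
  have "min ((x - \<alpha>) / \<delta>) ((\<beta> - x) / \<delta>) \<le> 0"
    using assms by (auto simp: divide_le_0_iff min_le_iff_disj)
  then show ?thesis unfolding trapezoid_def by linarith
qed

lemma trapezoid_eq_1:
  "0 < \<delta> \<Longrightarrow> \<alpha> + \<delta> \<le> x \<Longrightarrow> x \<le> \<beta> - \<delta> \<Longrightarrow> trapezoid \<alpha> \<beta> \<delta> x = 1"
  unfolding trapezoid_def by (auto simp: min_def le_divide_eq)

lemma continuous_on_trapezoid: "0 < \<delta> \<Longrightarrow> continuous_on S (trapezoid \<alpha> \<beta> \<delta>)"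
  unfolding trapezoid_def by (intro continuous_intros) auto

lemma square_le_max_square:
  fixes x :: real
  assumes "a \<le> x" "x \<le> b"
  shows "x\<^sup>2 \<le> max (a\<^sup>2) (b\<^sup>2)"
proof (cases "0 \<le> x")
  case True
  then have "x\<^sup>2 \<le> b\<^sup>2" using assms by (intro power_mono) auto
  then show ?thesis by simp
next
  case False
  then have "(- x)\<^sup>2 \<le> (- a)\<^sup>2" using assms by (intro power_mono) auto
  then show ?thesis by simp
qed

lemma arcsin_continuity_radius:
  assumes "-1 \<le> v" "v \<le> 1" "0 < e"
  obtains d where "0 < d"
    "\<And>x. -1 \<le> x \<Longrightarrow> x \<le> 1 \<Longrightarrow> \<bar>x - v\<bar> < d \<Longrightarrow> \<bar>arcsin x - arcsin v\<bar> < e"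
  using continuous_on_arcsin' assms unfolding continuous_on_iff dist_real_def
  by (metis atLeastAtMost_iff)

lemma eventually_gauss_sum_chebyshev_interval_ge:
  assumes "-1 \<le> u" "u < v" "v \<le> 1" "0 < e"
  shows "eventually (\<lambda>c. arcsin v - arcsin u - e
           \<le> gauss_sum c (\<lambda>x. if u < x \<and> x < v then chebyshev_weight x else 0)) sequentially"
proof -
  obtain du where du: "0 < du"
    "\<And>x. -1 \<le> x \<Longrightarrow> x \<le> 1 \<Longrightarrow> \<bar>x - u\<bar> < du \<Longrightarrow> \<bar>arcsin x - arcsin u\<bar> < e / 3"
    using arcsin_continuity_radius[of u "e / 3"] assms by auto
  obtain dv where dv: "0 < dv"
    "\<And>x. -1 \<le> x \<Longrightarrow> x \<le> 1 \<Longrightarrow> \<bar>x - v\<bar> < dv \<Longrightarrow> \<bar>arcsin x - arcsin v\<bar> < e / 3"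
    using arcsin_continuity_radius[of v "e / 3"] assms by auto
  define \<delta> where "\<delta> = min (min du dv) (v - u) / 4"
  have \<delta>: "0 < \<delta>" "\<delta> < du" "\<delta> < dv" "4 * \<delta> \<le> v - u"
    using du dv assms unfolding \<delta>_def by auto
  define u' v' where "u' = u + \<delta>" and "v' = v - \<delta>"
  have u'v': "-1 < u'" "u' \<le> v'" "v' < 1" using \<delta> assms by (auto simp: u'_def v'_def)
  have "\<bar>arcsin u' - arcsin u\<bar> < e / 3" "\<bar>arcsin v' - arcsin v\<bar> < e / 3"
    using du(2)[of u'] dv(2)[of v'] \<delta> u'v' by (auto simp: u'_def v'_def)
  then have "arcsin u' < arcsin u + e / 3" "arcsin v - e / 3 < arcsin v'"
    by (simp_all only: abs_less_iff) linarith+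
  define \<eta> where "\<eta> = min (1 - u'\<^sup>2) (1 - v'\<^sup>2)"
  have \<eta>: "0 < \<eta>"
    using u'v' by (auto simp: \<eta>_def abs_square_less_1 abs_less_iff)
  define h where "h x = chebyshev_trunc \<eta> x * trapezoid u v \<delta> x" for x
  have cont: "continuous_on {-1..1} h"
    unfolding h_def by (intro continuous_intros continuous_on_chebyshev_trunc continuous_on_trapezoid \<eta> \<delta>)
  have K: "((\<lambda>x. if x \<in> {u'..v'} then chebyshev_weight x else 0) has_integral (arcsin v' - arcsin u')) {-1..1}"
    using has_integral_restrict_closed_subinterval[OF chebyshev_weight_has_integral[of u' v', folded cbox_interval],
        of "-1" 1] u'v' by (simp add: cbox_interval)
  have integral_h: "arcsin v' - arcsin u' \<le> integral {-1..1} h"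
  proof (rule has_integral_le[OF K integrable_integral])
    show "h integrable_on {-1..1}" using cont by (rule integrable_continuous_real)
    fix x :: real assume "x \<in> {-1..1}"
    show "(if x \<in> {u'..v'} then chebyshev_weight x else 0) \<le> h x"
    proof (cases "x \<in> {u'..v'}")
      case True
      then have "\<eta> \<le> 1 - x\<^sup>2" using square_le_max_square[of u' x v'] by (auto simp: \<eta>_def)
      then show ?thesis
        using True \<delta> by (simp add: h_def chebyshev_trunc_eq trapezoid_eq_1 u'_def v'_def)
    next
      case False
      then show ?thesis by (auto simp: h_def chebyshev_trunc_nonneg[OF \<eta>] trapezoid_bounds)
    qed
  qed
  have gauss_sum_h: "gauss_sum c h \<le> gauss_sum c (\<lambda>x. if u < x \<and> x < v then chebyshev_weight x else 0)" for c
  proof (rule gauss_sum_mono)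
    fix x assume "x \<in> legendre_nodes c"
    then have "0 < 1 - x\<^sup>2" using legendre_node_square_less_1 by simp
    then have "h x \<le> chebyshev_weight x"
      using chebyshev_trunc_le[of x \<eta>] chebyshev_trunc_nonneg[OF \<eta>] trapezoid_bounds[of u v \<delta> x]
      unfolding h_def by (meson mult_left_le order_trans)
    then show "h x \<le> (if u < x \<and> x < v then chebyshev_weight x else 0)"
      using trapezoid_eq_0[OF \<delta>(1), of x u v] by (auto simp: h_def)
  qed
  have "eventually (\<lambda>c. integral {-1..1} h - e / 3 < gauss_sum c h) sequentially"
    using assms by (intro order_tendstoD(1)[OF gauss_sum_tendsto_integral[OF cont]]) simp
  then show ?thesis
  proof (rule eventually_mono)
    fix c assume "integral {-1..1} h - e / 3 < gauss_sum c h"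
    then show "arcsin v - arcsin u - e
        \<le> gauss_sum c (\<lambda>x. if u < x \<and> x < v then chebyshev_weight x else 0)"
      using integral_h gauss_sum_h[of c] \<open>arcsin u' < arcsin u + e / 3\<close>
        \<open>arcsin v - e / 3 < arcsin v'\<close> by linarith
  qed
qed

section \<open>Convergence for the Chebyshev weight\<close>

lemma tendsto_of_eventually_bounds:
  fixes X :: "nat \<Rightarrow> real"
  assumes "\<And>e. 0 < e \<Longrightarrow> eventually (\<lambda>n. L - e \<le> X n \<and> X n \<le> L + e) sequentially"
  shows "X \<longlonglongrightarrow> L"
proof (rule tendstoI)
  fix e :: real assume "0 < e"
  then show "eventually (\<lambda>n. dist (X n) L < e) sequentially"
    using assms[of "e / 2"] by (auto elim!: eventually_mono simp: dist_real_def abs_less_iff)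
qed

lemma gauss_sum_chebyshev_tendsto: "(\<lambda>c. gauss_sum c chebyshev_weight) \<longlonglongrightarrow> pi"
proof (rule tendsto_of_eventually_bounds)
  fix e :: real assume "0 < e"
  have "gauss_sum c (\<lambda>x. if -1 < x \<and> x < 1 then chebyshev_weight x else 0) = gauss_sum c chebyshev_weight"
    for c by (intro gauss_sum_cong) (simp add: legendre_nodes_bounds)
  then have "eventually (\<lambda>c. pi - e \<le> gauss_sum c chebyshev_weight) sequentially"
    using eventually_gauss_sum_chebyshev_interval_ge[of "-1" 1 e] \<open>0 < e\<close> by simp
  then show "eventually (\<lambda>c. pi - e \<le> gauss_sum c chebyshev_weight \<and> gauss_sum c chebyshev_weight \<le> pi + e)
      sequentially"
    using eventually_gauss_sum_chebyshev_le[OF \<open>0 < e\<close>] by eventually_elim simp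
qed

lemma gauss_sum_chebyshev_below_tendsto:
  assumes "-1 < t" "t < 1"
  shows "(\<lambda>c. gauss_sum c (\<lambda>x. if x \<le> t then chebyshev_weight x else 0)) \<longlonglongrightarrow> arcsin t + pi / 2"
proof (rule tendsto_of_eventually_bounds)
  fix e :: real assume "0 < e"
  define below above where
    "below c = gauss_sum c (\<lambda>x. if x \<le> t then chebyshev_weight x else 0)" and
    "above c = gauss_sum c (\<lambda>x. if t < x \<and> x < 1 then chebyshev_weight x else 0)" for c
  have nonneg: "0 \<le> chebyshev_weight x" if "x \<in> legendre_nodes c" for x c
    using legendre_node_square_less_1[OF that] by (intro chebyshev_weight_nonneg) simp
  have "gauss_sum c (\<lambda>x. if -1 < x \<and> x < t then chebyshev_weight x else 0) \<le> below c" for c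
    unfolding below_def using nonneg by (intro gauss_sum_mono) auto
  then have "eventually (\<lambda>c. arcsin t + pi / 2 - e \<le> below c) sequentially"
    using eventually_gauss_sum_chebyshev_interval_ge[of "-1" t e] assms \<open>0 < e\<close>
    by (auto elim!: eventually_mono intro: order_trans)
  moreover have "eventually (\<lambda>c. below c + above c \<le> gauss_sum c chebyshev_weight) sequentially"
    unfolding below_def above_def gauss_sum_add[symmetric] using nonneg
    by (intro always_eventually allI gauss_sum_mono) auto
  moreover have "eventually (\<lambda>c. pi / 2 - arcsin t - e / 2 \<le> above c) sequentially"
    using eventually_gauss_sum_chebyshev_interval_ge[of t 1 "e / 2"] assms \<open>0 < e\<close>
    by (simp add: above_def)
  moreover have "eventually (\<lambda>c. gauss_sum c chebyshev_weight \<le> pi + e / 2) sequentially"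
    using eventually_gauss_sum_chebyshev_le \<open>0 < e\<close> by simp
  ultimately show "eventually (\<lambda>c. arcsin t + pi / 2 - e \<le> below c \<and> below c \<le> arcsin t + pi / 2 + e)
      sequentially"
    by eventually_elim linarith
qed

section \<open>The Tardos distributions\<close>

lemma sum_legendre_roots: "(\<Sum>k=1..c. f (legendre_root k c)) = (\<Sum>a\<in>legendre_nodes c. f a)"
proof -
  define xs where "xs = sorted_list_of_set (legendre_nodes c)"
  have xs: "set xs = legendre_nodes c" "distinct xs" "length xs = c"
    by (simp_all add: xs_def finite_legendre_nodes card_legendre_nodes)
  have "(\<Sum>k=1..c. f (legendre_root k c)) = (\<Sum>k<c. f (xs ! k))"
    by (simp add: legendre_root_def legendre_nodes_def xs_def sum.atLeast1_atMost_eq)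
  also have "\<dots> = sum_list (map f xs)" by (simp add: sum_list_sum_nth xs(3) atLeast0LessThan)
  also have "\<dots> = (\<Sum>a\<in>legendre_nodes c. f a)" by (simp add: sum.distinct_set_conv_list xs(1,2) flip: xs(1))
  finally show ?thesis .
qed

lemma tardos_weight_eq:
  assumes "a \<in> legendre_nodes c"
  shows "2 / ((1 - a\<^sup>2) powr (3/2) * (poly (pderiv (legendre c)) a)\<^sup>2)
           = 2 / ((2 * real c + 1) * poly_integral (legendre c * legendre c))
             * (christoffel c a * chebyshev_weight a)"
proof -
  have "0 < 1 - a\<^sup>2"
    using legendre_node_square_less_1[OF assms] by simp
  then have "(1 - a\<^sup>2) powr (3/2) = (1 - a\<^sup>2) * sqrt (1 - a\<^sup>2)"
    by (simp add: powr_add[of _ 1 "1/2", simplified] powr_half_sqrt)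
  then show ?thesis
    using poly_integral_square_pos[OF legendre_nonzero, of c] \<open>0 < 1 - a\<^sup>2\<close>
    by (simp add: christoffel_eq[OF assms] chebyshev_weight_def)
qed

lemma F_opt_eq_gauss_sum_ratio:
  "F_opt c p = gauss_sum c (\<lambda>x. if x \<le> 2 * p - 1 then chebyshev_weight x else 0)
                 / gauss_sum c chebyshev_weight"
proof -
  define \<kappa> where "\<kappa> = 2 / ((2 * real c + 1) * poly_integral (legendre c * legendre c))"
  define W where "W r = 2 / ((1 - r\<^sup>2) powr (3/2) * (poly (pderiv (legendre c)) r)\<^sup>2)" for r
  have "\<kappa> \<noteq> 0"
    using poly_integral_square_pos[OF legendre_nonzero, of c] by (simp add: \<kappa>_def)
  have W: "W a = \<kappa> * (christoffel c a * chebyshev_weight a)" if "a \<in> legendre_nodes c" for a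
    using tardos_weight_eq[OF that] by (simp add: W_def \<kappa>_def)
  have "tardos_N c = (\<Sum>k=1..c. W (legendre_root k c))"
    by (simp add: tardos_N_def tardos_w_def W_def)
  also have "\<dots> = (\<Sum>a\<in>legendre_nodes c. W a)" by (rule sum_legendre_roots)
  also have "\<dots> = \<kappa> * gauss_sum c chebyshev_weight"
    by (simp add: gauss_sum_def sum_distrib_left W)
  finally have N: "tardos_N c = \<kappa> * gauss_sum c chebyshev_weight" .
  define H where "H r = W r * (if r \<le> 2 * p - 1 then 1 else 0)" for r
  have "(\<Sum>k=1..c. tardos_w k c * heaviside (p - tardos_p k c)) = (\<Sum>k=1..c. H (legendre_root k c))"
    by (intro sum.cong) (simp_all add: tardos_w_def tardos_p_def heaviside_def W_def H_def field_simps)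
  also have "\<dots> = (\<Sum>a\<in>legendre_nodes c. H a)" by (rule sum_legendre_roots)
  also have "\<dots> = \<kappa> * gauss_sum c (\<lambda>x. if x \<le> 2 * p - 1 then chebyshev_weight x else 0)"
    unfolding gauss_sum_def sum_distrib_left by (intro sum.cong) (simp_all add: H_def W)
  finally show ?thesis using \<open>\<kappa> \<noteq> 0\<close> by (simp add: F_opt_def N)
qed

lemma F_arcsine_eq:
  assumes "0 < p" "p < 1"
  shows "F_arcsine p = (arcsin (2 * p - 1) + pi / 2) / pi"
proof -
  define \<theta> where "\<theta> = arcsin (sqrt p)"
  have sqrt_p: "0 \<le> sqrt p" "sqrt p \<le> 1" using assms by auto
  then have "sin \<theta> = sqrt p" unfolding \<theta>_def by (intro sin_arcsin) (use sqrt_p in linarith)+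
  have "0 \<le> \<theta>" "\<theta> \<le> pi / 2"
    using arcsin_le_arcsin[of 0 "sqrt p"] arcsin_le_arcsin[of "sqrt p" 1] sqrt_p by (auto simp: \<theta>_def)
  have "sin (2 * \<theta> - pi / 2) = 2 * p - 1"
    using \<open>sin \<theta> = sqrt p\<close> assms by (simp add: sin_diff cos_double_sin)
  then have "arcsin (2 * p - 1) = arcsin (sin (2 * \<theta> - pi / 2))" by simp
  also have "\<dots> = 2 * \<theta> - pi / 2"
    using \<open>0 \<le> \<theta>\<close> \<open>\<theta> \<le> pi / 2\<close> by (intro arcsin_sin) auto
  finally have "arcsin (2 * p - 1) = 2 * \<theta> - pi / 2" .
  then show ?thesis unfolding F_arcsine_def \<theta>_def by (simp add: field_simps)
qed

theorem theorem2:
  fixes p :: real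
  assumes "0 < p" and "p < 1"
  shows "(\<lambda>c. F_opt c p) \<longlonglongrightarrow> F_arcsine p"
proof -
  have "-1 < 2 * p - 1" "2 * p - 1 < 1" using assms by auto
  then have "(\<lambda>c. gauss_sum c (\<lambda>x. if x \<le> 2 * p - 1 then chebyshev_weight x else 0)
                / gauss_sum c chebyshev_weight) \<longlonglongrightarrow> (arcsin (2 * p - 1) + pi / 2) / pi"
    by (intro tendsto_divide gauss_sum_chebyshev_below_tendsto gauss_sum_chebyshev_tendsto) simp_all
  then show ?thesis by (simp add: F_opt_eq_gauss_sum_ratio F_arcsine_eq[OF assms])
qed

end
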